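(* In the setting below, for any two points $p,q\in X$ exactly one of the following holds or at least one of: (i) $S_p\cap S_q=\emptyset$; (ii) $S_p\subseteq S_q$ or $S_q\subseteq S_p$; (iii) $S_p\cup S_q=E$ and $|S_p\cap S_q|=1$; (iv) $S_p\cup S_q=E$ and $|S_p\cap S_q|=n-1$. That is, at least one of (i)–(iv) holds.
   Context: Setting: $E=\{e_0,\dots,e_n\}\subset\mathbb R^n$ is the vertex set of an $n$-simplex with $e_0+\cdots+e_n=0$, and $X\subset\mathbb R^n\setminus\{0\}$ is a finite set with $E\subseteq X$, no element of $X$ a positive multiple of another, such that every $n+1$ points of $X$ are in good position. (A finite set $A$ is in conical position if $0\notin\operatorname{conv}A$ and no point of $A$ lies in the positive hull—set of nonnegative linear combinations—of the other points; it is in good position otherwise.) For $p\in X$, the support $S_p$ is the minimal subset of $E$ whose positive hull contains $p$. *)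

theory Defs
  imports "HOL-Analysis.Analysis"
begin

definition pos_hull :: "'a::real_vector set \<Rightarrow> 'a set" where
  "pos_hull A = {x. \<exists>c. (\<forall>a\<in>A. c a \<ge> 0) \<and> x = (\<Sum>a\<in>A. c a *\<^sub>R a)}"

definition conical_position :: "'a::real_vector set \<Rightarrow> bool" where
  "conical_position A \<longleftrightarrow> 0 \<notin> convex hull A \<and> (\<forall>a\<in>A. a \<notin> pos_hull (A - {a}))"

definition good_position :: "'a::real_vector set \<Rightarrow> bool" where
  "good_position A \<longleftrightarrow> \<not> conical_position A"

definition is_support :: "'a::real_vector set \<Rightarrow> 'a \<Rightarrow> 'a set \<Rightarrow> bool" where
  "is_support E p S \<longleftrightarrow> S \<subseteq> E \<and> p \<in> pos_hull S \<and> (\<forall>T. T \<subset> S \<longrightarrow> p \<notin> pos_hull T)"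

end

theory Submission
  imports Defs
begin

text \<open>Write \<open>p = (\<Sum>e\<in>E. \<alpha> e *\<^sub>R e)\<close> with \<open>\<alpha>\<close> positive exactly on \<open>S\<^sub>p\<close>. As \<open>E\<close> is affinely
  independent with \<open>\<Sum>E = 0\<close>, such coefficients are unique up to an additive constant, so a
  linear relation among \<open>p\<close>, \<open>q\<close> and vertices of \<open>E\<close> says that a certain coefficient function is
  constant on \<open>E\<close>. Suppose \<open>S\<^sub>p\<close> and \<open>S\<^sub>q\<close> cross, sharing \<open>i\<close>, with \<open>x \<in> S\<^sub>p - S\<^sub>q\<close> and
  \<open>y \<in> S\<^sub>q - S\<^sub>p\<close>. If a vertex \<open>r\<close> lies in neither support, replacing \<open>i\<close> and \<open>r\<close> by \<open>p\<close> and \<open>q\<close>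
  yields \<open>n + 1\<close> points of \<open>X\<close> in conical position; so \<open>S\<^sub>p \<union> S\<^sub>q = E\<close>. Replacing a single vertex
  by \<open>p\<close> shows that the positive coefficients of \<open>p\<close> agree except possibly the largest. Hence if
  \<open>|S\<^sub>p \<inter> S\<^sub>q| \<ge> 2\<close> and \<open>S\<^sub>p - S\<^sub>q\<close> had two vertices, replacing its vertex of least coefficient
  and \<open>y\<close> by \<open>p\<close> and \<open>q\<close> would again be conical. By symmetry both private parts are then
  singletons, so \<open>|S\<^sub>p \<inter> S\<^sub>q| = n - 1\<close>.\<close>

lemma conical_positionI:
  fixes A :: "'a::real_vector set"
  assumes "finite A"
    and two_neg: "\<And>\<mu>. (\<Sum>a\<in>A. \<mu> a *\<^sub>R a) = 0 \<Longrightarrow> \<exists>a\<in>A. \<mu> a \<noteq> 0 \<Longrightarrow>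
      \<exists>a\<in>A. \<exists>b\<in>A. a \<noteq> b \<and> \<mu> a < 0 \<and> \<mu> b < 0"
  shows "conical_position A"
  unfolding conical_position_def
proof
  show "0 \<notin> convex hull A"
  proof
    assume "0 \<in> convex hull A"
    then obtain u where u: "\<forall>x\<in>A. 0 \<le> u x" "sum u A = 1" "(\<Sum>x\<in>A. u x *\<^sub>R x) = 0"
      unfolding convex_hull_finite[OF \<open>finite A\<close>] by auto
    have "\<exists>a\<in>A. u a \<noteq> 0" using u(2) by (metis sum.neutral zero_neq_one)
    with two_neg[OF u(3)] u(1) show False by force
  qed
  show "\<forall>a\<in>A. a \<notin> pos_hull (A - {a})"
  proof (intro ballI notI)
    fix a assume "a \<in> A" and "a \<in> pos_hull (A - {a})"
    then obtain c where c: "\<forall>b\<in>A - {a}. 0 \<le> c b" "a = (\<Sum>b\<in>A - {a}. c b *\<^sub>R b)"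
      unfolding pos_hull_def by auto
    define \<mu> where "\<mu> b = (if b = a then -1 else c b)" for b
    have "(\<Sum>b\<in>A. \<mu> b *\<^sub>R b) = \<mu> a *\<^sub>R a + (\<Sum>b\<in>A - {a}. \<mu> b *\<^sub>R b)"
      using sum.remove[OF \<open>finite A\<close> \<open>a \<in> A\<close>] by blast
    also have "(\<Sum>b\<in>A - {a}. \<mu> b *\<^sub>R b) = (\<Sum>b\<in>A - {a}. c b *\<^sub>R b)"
      by (rule sum.cong) (auto simp: \<mu>_def)
    finally have "(\<Sum>b\<in>A. \<mu> b *\<^sub>R b) = 0" using c(2) by (simp add: \<mu>_def)
    from two_neg[OF this] \<open>a \<in> A\<close> obtain x y where "x \<in> A" "y \<in> A" "x \<noteq> y" "\<mu> x < 0" "\<mu> y < 0"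
      by (force simp: \<mu>_def)
    with c(1) show False unfolding \<mu>_def by (metis DiffI empty_iff insert_iff not_le)
  qed
qed

definition support_coeffs :: "'a::real_vector set \<Rightarrow> 'a set \<Rightarrow> 'a \<Rightarrow> ('a \<Rightarrow> real) \<Rightarrow> bool" where
  "support_coeffs E S p \<alpha> \<longleftrightarrow>
     S \<subseteq> E \<and> (\<forall>e\<in>S. 0 < \<alpha> e) \<and> (\<forall>e\<in>E - S. \<alpha> e = 0) \<and> p = (\<Sum>e\<in>E. \<alpha> e *\<^sub>R e)"

lemma support_coeffsD:
  assumes "support_coeffs E S p \<alpha>"
  shows "S \<subseteq> E" "e \<in> S \<Longrightarrow> 0 < \<alpha> e" "e \<notin> S \<Longrightarrow> e \<in> E \<Longrightarrow> \<alpha> e = 0"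
    and "p = (\<Sum>e\<in>E. \<alpha> e *\<^sub>R e)"
  using assms unfolding support_coeffs_def by auto

lemma is_support_imp_support_coeffs:
  assumes "is_support E p S" "finite E"
  obtains \<alpha> where "support_coeffs E S p \<alpha>"
proof -
  have "S \<subseteq> E" and "p \<in> pos_hull S" and minimal: "\<And>T. T \<subset> S \<Longrightarrow> p \<notin> pos_hull T"
    using assms(1) unfolding is_support_def by auto
  have "finite S" using \<open>S \<subseteq> E\<close> \<open>finite E\<close> finite_subset by blast
  obtain c where c: "\<forall>a\<in>S. 0 \<le> c a" "p = (\<Sum>a\<in>S. c a *\<^sub>R a)"
    using \<open>p \<in> pos_hull S\<close> unfolding pos_hull_def by auto
  have c_pos: "0 < c a" if "a \<in> S" for a
  proof (rule ccontr)
    assume "\<not> 0 < c a"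
    then have "c a = 0" using c(1) that by force
    then have "p = (\<Sum>b\<in>S - {a}. c b *\<^sub>R b)"
      using c(2) sum.remove[OF \<open>finite S\<close> that, of "\<lambda>b. c b *\<^sub>R b"] by simp
    then have "p \<in> pos_hull (S - {a})" unfolding pos_hull_def using c(1) by auto
    with minimal[of "S - {a}"] that show False by blast
  qed
  define \<alpha> where "\<alpha> e = (if e \<in> S then c e else 0)" for e
  have "(\<Sum>e\<in>E. \<alpha> e *\<^sub>R e) = (\<Sum>e\<in>S. c e *\<^sub>R e)"
    using sum.mono_neutral_right[OF \<open>finite E\<close> \<open>S \<subseteq> E\<close>, of "\<lambda>e. \<alpha> e *\<^sub>R e"]
    by (simp add: \<alpha>_def)
  then have "support_coeffs E S p \<alpha>"
    unfolding support_coeffs_def using \<open>S \<subseteq> E\<close> c(2) c_pos by (simp add: \<alpha>_def)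
  then show thesis by (rule that)
qed

locale centred_simplex =
  fixes E :: "'a::euclidean_space set"
  assumes independent: "\<not> affine_dependent E" and sum_zero: "\<Sum>E = 0"
begin

lemma finite_E: "finite E"
  using aff_independent_finite[OF independent] .

lemma combination_eq_zero_imp_coeffs_const:
  assumes "(\<Sum>e\<in>E. f e *\<^sub>R e) = 0" "e1 \<in> E" "e2 \<in> E"
  shows "f e1 = f e2"
proof -
  define m where "m = sum f E / card E"
  define u where "u e = f e - m" for e
  have "card E \<noteq> 0" using finite_E \<open>e1 \<in> E\<close> by auto
  then have "sum u E = 0" unfolding u_def m_def by (simp add: sum_subtractf)
  moreover have "(\<Sum>e\<in>E. u e *\<^sub>R e) = 0"
    using assms(1) sum_zero
    by (simp add: u_def scaleR_diff_left sum_subtractf flip: scaleR_sum_right)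
  ultimately have "\<forall>e\<in>E. u e = 0"
    using independent unfolding affine_dependent_explicit_finite[OF finite_E] by blast
  then show ?thesis using assms(2,3) unfolding u_def by force
qed

lemma combination_eq_imp_coeffs_diff_const:
  assumes "(\<Sum>e\<in>E. \<alpha> e *\<^sub>R e) = (\<Sum>e\<in>E. \<beta> e *\<^sub>R e)" "e1 \<in> E" "e2 \<in> E"
  shows "\<alpha> e1 - \<beta> e1 = \<alpha> e2 - \<beta> e2"
  using assms by (intro combination_eq_zero_imp_coeffs_const)
    (simp_all add: scaleR_diff_left sum_subtractf)

lemma is_support_neq_E:
  assumes "is_support E p S" "E \<noteq> {}"
  shows "S \<noteq> E"
proof
  assume "S = E"
  obtain \<alpha> where \<alpha>: "support_coeffs E S p \<alpha>"
    using is_support_imp_support_coeffs[OF assms(1) finite_E] .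
  obtain d where "d \<in> E" and "Min (\<alpha> ` E) = \<alpha> d"
    using obtains_MIN[OF finite_E \<open>E \<noteq> {}\<close>] .
  then have d_min: "\<forall>e\<in>E. \<alpha> d \<le> \<alpha> e" using finite_E by (metis Min_le finite_imageI imageI)
  have "p = (\<Sum>e\<in>E. \<alpha> e *\<^sub>R e) - \<alpha> d *\<^sub>R (\<Sum>e\<in>E. e)"
    using \<alpha> sum_zero unfolding support_coeffs_def by simp
  also have "\<dots> = (\<Sum>e\<in>E. (\<alpha> e - \<alpha> d) *\<^sub>R e)"
    by (simp add: scaleR_diff_left sum_subtractf scaleR_sum_right)
  also have "\<dots> = (\<Sum>e\<in>E - {d}. (\<alpha> e - \<alpha> d) *\<^sub>R e)"
    using sum.remove[OF finite_E \<open>d \<in> E\<close>, of "\<lambda>e. (\<alpha> e - \<alpha> d) *\<^sub>R e"] by simp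
  finally have "p \<in> pos_hull (E - {d})"
    unfolding pos_hull_def using d_min by (intro CollectI exI[of _ "\<lambda>e. \<alpha> e - \<alpha> d"]) auto
  moreover have "E - {d} \<subset> S" using \<open>S = E\<close> \<open>d \<in> E\<close> by auto
  ultimately show False using assms(1) unfolding is_support_def by blast
qed

text \<open>A vertex \<open>v\<close> has support \<open>{v}\<close>.\<close>
lemma support_coeffs_not_vertex:
  assumes "support_coeffs E S p \<alpha>" "S \<noteq> E" "\<not> S \<subseteq> {p}"
  shows "p \<notin> E"
proof
  assume "p \<in> E"
  obtain w where "w \<in> S" "w \<noteq> p" using assms(3) by blast
  obtain z where "z \<in> E" "z \<notin> S" using assms(1,2) unfolding support_coeffs_def by blast
  have "(\<Sum>e\<in>E. \<alpha> e *\<^sub>R e) = (\<Sum>e\<in>E. (if e = p then 1 else 0) *\<^sub>R e)"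
    using assms(1) \<open>p \<in> E\<close> finite_E unfolding support_coeffs_def
    by (simp add: if_distrib[of "\<lambda>c. c *\<^sub>R _"] sum.delta' cong: if_cong)
  from combination_eq_imp_coeffs_diff_const[OF this, of w z] \<open>w \<in> S\<close> \<open>z \<in> E\<close> \<open>z \<notin> S\<close> \<open>w \<noteq> p\<close>
  have "\<alpha> w = (if z = p then - 1 else 0)"
    using assms(1) unfolding support_coeffs_def by auto
  moreover have "0 < \<alpha> w" using assms(1) \<open>w \<in> S\<close> unfolding support_coeffs_def by blast
  ultimately show False by (simp split: if_splits)
qed

text \<open>Substituting the coefficients \<open>c a\<close> of the points \<open>a \<in> P\<close> turns a linear relation on
  \<open>P \<union> (E - D)\<close> into a vanishing combination of \<open>E\<close>.\<close>
lemma relation_coeffs_const: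
  assumes "finite P" "P \<inter> E = {}" "D \<subseteq> E"
    and coeffs: "\<And>a. a \<in> P \<Longrightarrow> a = (\<Sum>e\<in>E. c a e *\<^sub>R e)"
    and relation: "(\<Sum>a\<in>P \<union> (E - D). \<mu> a *\<^sub>R a) = 0" and "e1 \<in> E" "e2 \<in> E"
  shows "(\<Sum>a\<in>P. \<mu> a * c a e1) + (if e1 \<in> D then 0 else \<mu> e1)
       = (\<Sum>a\<in>P. \<mu> a * c a e2) + (if e2 \<in> D then 0 else \<mu> e2)"
proof (rule combination_eq_zero_imp_coeffs_const[OF _ \<open>e1 \<in> E\<close> \<open>e2 \<in> E\<close>])
  have "(\<Sum>a\<in>P. \<mu> a *\<^sub>R a) = (\<Sum>a\<in>P. \<Sum>e\<in>E. (\<mu> a * c a e) *\<^sub>R e)"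
  proof (rule sum.cong)
    show "\<mu> a *\<^sub>R a = (\<Sum>e\<in>E. (\<mu> a * c a e) *\<^sub>R e)" if "a \<in> P" for a
      by (subst coeffs[OF that]) (simp add: scaleR_sum_right)
  qed simp
  also have "\<dots> = (\<Sum>e\<in>E. (\<Sum>a\<in>P. \<mu> a * c a e) *\<^sub>R e)"
    by (simp add: sum.swap[of _ P] scaleR_sum_left)
  finally have P_part: "(\<Sum>a\<in>P. \<mu> a *\<^sub>R a) = (\<Sum>e\<in>E. (\<Sum>a\<in>P. \<mu> a * c a e) *\<^sub>R e)" .
  have "(\<Sum>e\<in>E - D. \<mu> e *\<^sub>R e) = (\<Sum>e\<in>E. (if e \<in> D then 0 else \<mu> e) *\<^sub>R e)"
    by (rule sum.mono_neutral_cong_left) (use finite_E in auto)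
  moreover have "(\<Sum>a\<in>P \<union> (E - D). \<mu> a *\<^sub>R a) = (\<Sum>a\<in>P. \<mu> a *\<^sub>R a) + (\<Sum>e\<in>E - D. \<mu> e *\<^sub>R e)"
    by (rule sum.union_disjoint) (use assms(1,2) finite_E in auto)
  ultimately show "(\<Sum>e\<in>E. ((\<Sum>a\<in>P. \<mu> a * c a e) + (if e \<in> D then 0 else \<mu> e)) *\<^sub>R e) = 0"
    using P_part relation by (simp add: scaleR_add_left sum.distrib)
qed

lemma conical_exchange_middle_vertex:
  assumes "p \<notin> E" and p: "p = (\<Sum>e\<in>E. \<alpha> e *\<^sub>R e)"
    and vertices: "z \<in> E" "d \<in> E" "e1 \<in> E" "e2 \<in> E" "e1 \<noteq> e2"
    and order: "\<alpha> z < \<alpha> d" "\<alpha> d < \<alpha> e1" "\<alpha> d < \<alpha> e2"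
  shows "conical_position ({p} \<union> (E - {d}))"
proof (rule conical_positionI)
  show "finite ({p} \<union> (E - {d}))" using finite_E by simp
  fix \<mu> assume relation: "(\<Sum>a\<in>{p} \<union> (E - {d}). \<mu> a *\<^sub>R a) = 0"
    and nontrivial: "\<exists>a\<in>{p} \<union> (E - {d}). \<mu> a \<noteq> 0"
  have "\<mu> p * \<alpha> e + \<mu> e = \<mu> p * \<alpha> d" if "e \<in> E" "e \<noteq> d" for e
    using relation_coeffs_const[of "{p}" "{d}" "\<lambda>_. \<alpha>", OF _ _ _ _ relation that(1) \<open>d \<in> E\<close>]
      p \<open>p \<notin> E\<close> \<open>d \<in> E\<close> that(2) by (simp only: sum.insert) auto
  then have \<mu>: "\<mu> e = \<mu> p * (\<alpha> d - \<alpha> e)" if "e \<in> E" "e \<noteq> d" for e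
    using that by (simp add: algebra_simps)
  show "\<exists>a\<in>{p} \<union> (E - {d}). \<exists>b\<in>{p} \<union> (E - {d}). a \<noteq> b \<and> \<mu> a < 0 \<and> \<mu> b < 0"
  proof (cases "\<mu> p" "0::real" rule: linorder_cases)
    case less
    have "z \<noteq> d" using order by auto
    then have "\<mu> z < 0" using \<mu>[of z] vertices order less by (simp add: mult_neg_pos)
    with less vertices \<open>z \<noteq> d\<close> \<open>p \<notin> E\<close> show ?thesis by (intro bexI[of _ p] bexI[of _ z]) auto
  next
    case equal
    then show ?thesis using \<mu> nontrivial by auto
  next
    case greater
    have "e1 \<noteq> d" "e2 \<noteq> d" using order by auto
    then have "\<mu> e1 < 0" "\<mu> e2 < 0" using \<mu>[of e1] \<mu>[of e2] vertices order greater
      by (simp_all add: mult_pos_neg)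
    with vertices \<open>e1 \<noteq> d\<close> \<open>e2 \<noteq> d\<close> show ?thesis by (intro bexI[of _ e1] bexI[of _ e2]) auto
  qed
qed

lemma conical_exchange_shared_vertex:
  assumes outside: "p \<notin> E" "q \<notin> E" "p \<noteq> q"
    and p: "p = (\<Sum>e\<in>E. \<alpha> e *\<^sub>R e)" and q: "q = (\<Sum>e\<in>E. \<beta> e *\<^sub>R e)"
    and i: "i \<in> E" "0 < \<alpha> i" "0 < \<beta> i" and r: "r \<in> E" "\<alpha> r = 0" "\<beta> r = 0"
    and x: "x \<in> E" "0 < \<alpha> x" "\<beta> x = 0" and y: "y \<in> E" "\<alpha> y = 0" "0 < \<beta> y"
  shows "conical_position ({p, q} \<union> (E - {i, r}))"
proof (rule conical_positionI)
  show "finite ({p, q} \<union> (E - {i, r}))" using finite_E by simp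
  fix \<mu> assume relation: "(\<Sum>a\<in>{p, q} \<union> (E - {i, r}). \<mu> a *\<^sub>R a) = 0"
    and nontrivial: "\<exists>a\<in>{p, q} \<union> (E - {i, r}). \<mu> a \<noteq> 0"
  have coeffs: "a = (\<Sum>e\<in>E. (if a = p then \<alpha> else \<beta>) e *\<^sub>R e)" if "a \<in> {p, q}" for a
    using that p q by auto
  note coeffs_const = relation_coeffs_const[of "{p, q}" "{i, r}" "\<lambda>a. if a = p then \<alpha> else \<beta>",
      OF _ _ _ coeffs relation _ \<open>r \<in> E\<close>]
  have at_i: "\<mu> p * \<alpha> i + \<mu> q * \<beta> i = 0"
    using coeffs_const[OF _ _ _ _ \<open>i \<in> E\<close>] outside i r by auto
  have \<mu>: "\<mu> e = - (\<mu> p * \<alpha> e + \<mu> q * \<beta> e)" if "e \<in> E" "e \<noteq> i" "e \<noteq> r" for e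
    using coeffs_const[OF _ _ _ _ \<open>e \<in> E\<close>] outside i r x y that by auto
  have "x \<noteq> i" "x \<noteq> r" "y \<noteq> i" "y \<noteq> r" using x y i r by auto
  show "\<exists>a\<in>{p, q} \<union> (E - {i, r}). \<exists>b\<in>{p, q} \<union> (E - {i, r}). a \<noteq> b \<and> \<mu> a < 0 \<and> \<mu> b < 0"
  proof (cases "\<mu> p" "0::real" rule: linorder_cases)
    case less
    then have "0 < \<mu> q" using at_i i by (smt (verit) mult_neg_pos zero_less_mult_iff)
    then have "\<mu> y < 0" using \<mu>[of y] \<open>y \<noteq> i\<close> \<open>y \<noteq> r\<close> y by auto
    then show ?thesis using less outside y \<open>y \<noteq> i\<close> \<open>y \<noteq> r\<close>
      by (intro bexI[of _ p] bexI[of _ y]) auto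
  next
    case equal
    then have "\<mu> q = 0" using at_i i by simp
    then show ?thesis using equal \<mu> nontrivial by auto
  next
    case greater
    then have "\<mu> q < 0" using at_i i by (smt (verit) mult_pos_pos mult_less_0_iff)
    moreover have "\<mu> x < 0" using \<mu>[of x] \<open>x \<noteq> i\<close> \<open>x \<noteq> r\<close> greater x by auto
    ultimately show ?thesis using outside x \<open>x \<noteq> i\<close> \<open>x \<noteq> r\<close>
      by (intro bexI[of _ q] bexI[of _ x]) auto
  qed
qed

lemma conical_exchange_private_vertices:
  assumes outside: "p \<notin> E" "q \<notin> E" "p \<noteq> q"
    and p: "p = (\<Sum>e\<in>E. \<alpha> e *\<^sub>R e)" and q: "q = (\<Sum>e\<in>E. \<beta> e *\<^sub>R e)"
    and x: "x \<in> E" "0 < \<alpha> x" "\<beta> x = 0" and y: "y \<in> E" "\<alpha> y = 0" "0 < \<beta> y"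
    and I: "I \<subseteq> E - {x, y}" "2 \<le> card I" "\<forall>e\<in>I. 0 < \<alpha> e \<and> 0 < \<beta> e"
    and bound: "(\<forall>e\<in>I. \<alpha> x \<le> \<alpha> e) \<or> (\<forall>e\<in>I. \<beta> y \<le> \<beta> e)"
  shows "conical_position ({p, q} \<union> (E - {x, y}))"
proof (rule conical_positionI)
  show "finite ({p, q} \<union> (E - {x, y}))" using finite_E by simp
  fix \<mu> assume relation: "(\<Sum>a\<in>{p, q} \<union> (E - {x, y}). \<mu> a *\<^sub>R a) = 0"
    and nontrivial: "\<exists>a\<in>{p, q} \<union> (E - {x, y}). \<mu> a \<noteq> 0"
  have coeffs: "a = (\<Sum>e\<in>E. (if a = p then \<alpha> else \<beta>) e *\<^sub>R e)" if "a \<in> {p, q}" for a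
    using that p q by auto
  note coeffs_const = relation_coeffs_const[of "{p, q}" "{x, y}" "\<lambda>a. if a = p then \<alpha> else \<beta>",
      OF _ _ _ coeffs relation _ \<open>x \<in> E\<close>]
  have at_y: "\<mu> p * \<alpha> x = \<mu> q * \<beta> y"
    using coeffs_const[OF _ _ _ _ \<open>y \<in> E\<close>] outside x y by auto
  have \<mu>: "\<mu> e = \<mu> p * \<alpha> x - (\<mu> p * \<alpha> e + \<mu> q * \<beta> e)" if "e \<in> E" "e \<noteq> x" "e \<noteq> y" for e
    using coeffs_const[OF _ _ _ _ \<open>e \<in> E\<close>] outside x y that by auto
  show "\<exists>a\<in>{p, q} \<union> (E - {x, y}). \<exists>b\<in>{p, q} \<union> (E - {x, y}). a \<noteq> b \<and> \<mu> a < 0 \<and> \<mu> b < 0"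
  proof (cases "\<mu> p" "0::real" rule: linorder_cases)
    case less
    then have "\<mu> q < 0" using at_y x y by (metis mult_less_0_iff mult_neg_pos order.asym)
    then show ?thesis using less \<open>p \<noteq> q\<close> by blast
  next
    case equal
    then have "\<mu> q = 0" using at_y y by simp
    then show ?thesis using equal \<mu> nontrivial by auto
  next
    case greater
    then have "0 < \<mu> q" using at_y x y by (metis zero_less_mult_iff mult_pos_pos order.asym)
    have "\<mu> e < 0" if "e \<in> I" for e
    proof -
      have "e \<in> E" "e \<noteq> x" "e \<noteq> y" "0 < \<alpha> e" "0 < \<beta> e" using I that by auto
      with bound show ?thesis
      proof (elim disjE)
        assume "\<forall>e\<in>I. \<alpha> x \<le> \<alpha> e"
        then have "\<mu> p * \<alpha> x \<le> \<mu> p * \<alpha> e" using that greater by (simp add: mult_left_mono)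
        then show ?thesis using \<mu>[of e] \<open>0 < \<mu> q\<close> \<open>0 < \<beta> e\<close> \<open>e \<in> E\<close> \<open>e \<noteq> x\<close> \<open>e \<noteq> y\<close>
          by (smt (verit) mult_pos_pos)
      next
        assume "\<forall>e\<in>I. \<beta> y \<le> \<beta> e"
        then have "\<mu> q * \<beta> y \<le> \<mu> q * \<beta> e" using that \<open>0 < \<mu> q\<close> by (simp add: mult_left_mono)
        then show ?thesis using \<mu>[of e] at_y greater \<open>0 < \<alpha> e\<close> \<open>e \<in> E\<close> \<open>e \<noteq> x\<close> \<open>e \<noteq> y\<close>
          by (smt (verit) mult_pos_pos)
      qed
    qed
    moreover obtain a b where "a \<in> I" "b \<in> I" "a \<noteq> b"
      using I(2) card_le_Suc0_iff_eq[of I]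
      by (metis card.infinite not_less_eq_eq numeral_2_eq_2 zero_le nat.distinct(1))
    ultimately show ?thesis using I(1) by (intro bexI[of _ a] bexI[of _ b]) auto
  qed
qed

lemma support_coeffs_crossing:
  assumes p: "support_coeffs E Sp p \<alpha>" and q: "support_coeffs E Sq q \<beta>"
    and "Sp \<noteq> E" "Sq \<noteq> E" "i \<in> Sp \<inter> Sq" "x \<in> Sp - Sq" "y \<in> Sq - Sp"
  shows "p \<notin> E" "q \<notin> E" "p \<noteq> q"
proof -
  show "p \<notin> E" using support_coeffs_not_vertex[OF p] assms(3,5,6) by blast
  show "q \<notin> E" using support_coeffs_not_vertex[OF q] assms(4,5,7) by blast
  have "0 < \<alpha> x - \<beta> x" "\<alpha> y - \<beta> y < 0" "x \<in> E" "y \<in> E"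
    using support_coeffsD[OF p] support_coeffsD[OF q] assms(6,7) by auto
  then show "p \<noteq> q"
    using combination_eq_imp_coeffs_diff_const[of \<alpha> \<beta> x y]
      support_coeffsD(4)[OF p] support_coeffsD(4)[OF q] by force
qed

end

locale good_configuration = centred_simplex E for E :: "'a::euclidean_space set" +
  fixes X :: "'a set"
  assumes card_E: "card E = DIM('a) + 1" and E_subset_X: "E \<subseteq> X"
    and good: "\<forall>A. A \<subseteq> X \<and> card A = DIM('a) + 1 \<longrightarrow> good_position A"
begin

lemma E_nonempty: "E \<noteq> {}"
  using card_E by (metis card.empty add_is_0 one_neq_zero)

lemma not_conical_of_card:
  assumes "A \<subseteq> X" "card A = DIM('a) + 1"
  shows "\<not> conical_position A"
  using good assms unfolding good_position_def by simp

lemma not_conical_exchange_one: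
  assumes "p \<in> X" "p \<notin> E" "d \<in> E"
  shows "\<not> conical_position ({p} \<union> (E - {d}))"
proof (rule not_conical_of_card)
  show "{p} \<union> (E - {d}) \<subseteq> X" using assms(1) E_subset_X by blast
  have "card (E - {d}) = DIM('a)" using card_E finite_E assms(3) by (simp add: card_Diff_singleton)
  then show "card ({p} \<union> (E - {d})) = DIM('a) + 1" using assms(2) finite_E by simp
qed

lemma not_conical_exchange_two:
  assumes "p \<in> X" "q \<in> X" "p \<notin> E" "q \<notin> E" "p \<noteq> q" "a \<in> E" "b \<in> E" "a \<noteq> b"
  shows "\<not> conical_position ({p, q} \<union> (E - {a, b}))"
proof (rule not_conical_of_card)
  show "{p, q} \<union> (E - {a, b}) \<subseteq> X" using assms(1,2) E_subset_X by blast
  have "card (E - {a, b}) + 2 = card E"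
    using card_Diff_subset[OF _ , of "{a, b}" E] card_mono[OF finite_E, of "{a, b}"] assms(6-8)
    by simp
  then show "card ({p, q} \<union> (E - {a, b})) = DIM('a) + 1"
    using assms(3-5) finite_E card_E by simp
qed

text \<open>The positive coefficients of a point of \<open>X\<close> all agree, except possibly the largest one.\<close>
lemma support_coeff_ge_min_pair:
  assumes "p \<in> X" "is_support E p S" and \<alpha>: "support_coeffs E S p \<alpha>"
    and "d \<in> S" "e1 \<in> E" "e2 \<in> E" "e1 \<noteq> e2"
  shows "min (\<alpha> e1) (\<alpha> e2) \<le> \<alpha> d"
proof (rule ccontr)
  note coeffs = support_coeffsD[OF \<alpha>]
  assume "\<not> ?thesis"
  then have above: "\<alpha> d < \<alpha> e1" "\<alpha> d < \<alpha> e2" by auto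
  have "S \<noteq> E" using is_support_neq_E[OF assms(2) E_nonempty] .
  then obtain z where "z \<in> E" "z \<notin> S" using coeffs(1) by blast
  have "d \<in> E" "\<alpha> z < \<alpha> d" using coeffs(1-3) \<open>d \<in> S\<close> \<open>z \<in> E\<close> \<open>z \<notin> S\<close> by auto
  have "e1 \<in> S" "e2 \<in> S"
    using coeffs(2,3) above \<open>\<alpha> z < \<alpha> d\<close> \<open>e1 \<in> E\<close> \<open>e2 \<in> E\<close> \<open>d \<in> S\<close> by (metis less_asym)+
  then have "p \<notin> E" using support_coeffs_not_vertex[OF \<alpha> \<open>S \<noteq> E\<close>] \<open>e1 \<noteq> e2\<close> by blast
  have "conical_position ({p} \<union> (E - {d}))"
    by (rule conical_exchange_middle_vertex[OF \<open>p \<notin> E\<close> coeffs(4) \<open>z \<in> E\<close> \<open>d \<in> E\<close> assms(5-7)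
          \<open>\<alpha> z < \<alpha> d\<close> above])
  with not_conical_exchange_one[OF \<open>p \<in> X\<close> \<open>p \<notin> E\<close> \<open>d \<in> E\<close>] show False ..
qed

lemma crossing_supports_union:
  assumes "p \<in> X" "q \<in> X" and Sp: "is_support E p Sp" and Sq: "is_support E q Sq"
    and "i \<in> Sp \<inter> Sq" "x \<in> Sp - Sq" "y \<in> Sq - Sp"
  shows "Sp \<union> Sq = E"
proof (rule ccontr)
  assume "Sp \<union> Sq \<noteq> E"
  obtain \<alpha> \<beta> where \<alpha>: "support_coeffs E Sp p \<alpha>" and \<beta>: "support_coeffs E Sq q \<beta>"
    using is_support_imp_support_coeffs[OF _ finite_E] Sp Sq by metis
  note p = support_coeffsD[OF \<alpha>] and q = support_coeffsD[OF \<beta>]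
  have "Sp \<noteq> E" "Sq \<noteq> E" using is_support_neq_E E_nonempty Sp Sq by blast+
  note distinct = support_coeffs_crossing[OF \<alpha> \<beta> this assms(5-7)]
  obtain r where "r \<in> E" "r \<notin> Sp" "r \<notin> Sq" using \<open>Sp \<union> Sq \<noteq> E\<close> p(1) q(1) by blast
  have "i \<noteq> r" using \<open>r \<notin> Sp\<close> assms(5) by blast
  have i: "i \<in> E" "0 < \<alpha> i" "0 < \<beta> i" using assms(5) p(1,2) q(2) by auto
  have x: "x \<in> E" "0 < \<alpha> x" "\<beta> x = 0" using assms(6) p(1,2) q(3) by auto
  have y: "y \<in> E" "\<alpha> y = 0" "0 < \<beta> y" using assms(7) q(1,2) p(3) by auto
  have r: "\<alpha> r = 0" "\<beta> r = 0" using \<open>r \<in> E\<close> \<open>r \<notin> Sp\<close> \<open>r \<notin> Sq\<close> p(3) q(3) by auto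
  have "conical_position ({p, q} \<union> (E - {i, r}))"
    by (rule conical_exchange_shared_vertex[OF distinct p(4) q(4) i \<open>r \<in> E\<close> r x y])
  then show False
    using not_conical_exchange_two[OF assms(1,2) distinct \<open>i \<in> E\<close> \<open>r \<in> E\<close> \<open>i \<noteq> r\<close>] by blast
qed

lemma crossing_supports_private_card_le_one:
  assumes "p \<in> X" "q \<in> X" and Sp: "is_support E p Sp" and Sq: "is_support E q Sq"
    and "Sp \<union> Sq = E" "2 \<le> card (Sp \<inter> Sq)" "y \<in> Sq - Sp"
  shows "card (Sp - Sq) \<le> 1"
proof (rule ccontr)
  assume "\<not> card (Sp - Sq) \<le> 1"
  obtain \<alpha> \<beta> where \<alpha>: "support_coeffs E Sp p \<alpha>" and \<beta>: "support_coeffs E Sq q \<beta>"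
    using is_support_imp_support_coeffs[OF _ finite_E] Sp Sq by metis
  note p = support_coeffsD[OF \<alpha>] and q = support_coeffsD[OF \<beta>]
  have fin: "finite (Sp - Sq)" "finite (Sp \<inter> Sq)" using finite_E p(1) finite_subset by blast+
  obtain a b where ab: "a \<in> Sp - Sq" "b \<in> Sp - Sq" "a \<noteq> b"
    using \<open>\<not> card (Sp - Sq) \<le> 1\<close> card_le_Suc0_iff_eq[OF fin(1)] by auto
  then obtain x where "x \<in> Sp - Sq" and "Min (\<alpha> ` (Sp - Sq)) = \<alpha> x"
    using obtains_MIN[OF fin(1)] by blast
  then have x_min: "\<forall>e\<in>Sp - Sq. \<alpha> x \<le> \<alpha> e" using fin(1) by (metis Min_le finite_imageI imageI)
  obtain x' where "x' \<in> Sp - Sq" "x \<noteq> x'" using ab by blast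
  have bound: "\<forall>e\<in>Sp \<inter> Sq. \<alpha> x \<le> \<alpha> e"
  proof
    fix e assume "e \<in> Sp \<inter> Sq"
    have "min (\<alpha> x) (\<alpha> x') \<le> \<alpha> e"
      using support_coeff_ge_min_pair[OF \<open>p \<in> X\<close> Sp \<alpha>, of e x x'] \<open>e \<in> Sp \<inter> Sq\<close>
        \<open>x \<in> Sp - Sq\<close> \<open>x' \<in> Sp - Sq\<close> \<open>x \<noteq> x'\<close> p(1) by blast
    then show "\<alpha> x \<le> \<alpha> e" using x_min \<open>x' \<in> Sp - Sq\<close> by (simp add: min_def split: if_splits)
  qed
  have "Sp \<inter> Sq \<noteq> {}" using assms(6) by (metis card.empty not_numeral_le_zero)
  then obtain i where "i \<in> Sp \<inter> Sq" by blast
  have "Sp \<noteq> E" "Sq \<noteq> E" using is_support_neq_E E_nonempty Sp Sq by blast+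
  note distinct = support_coeffs_crossing[OF \<alpha> \<beta> this \<open>i \<in> Sp \<inter> Sq\<close> \<open>x \<in> Sp - Sq\<close> assms(7)]
  have x: "x \<in> E" "0 < \<alpha> x" "\<beta> x = 0" using \<open>x \<in> Sp - Sq\<close> p(1,2) q(3) by auto
  have y: "y \<in> E" "\<alpha> y = 0" "0 < \<beta> y" using assms(7) q(1,2) p(3) by auto
  have I: "Sp \<inter> Sq \<subseteq> E - {x, y}" "\<forall>e\<in>Sp \<inter> Sq. 0 < \<alpha> e \<and> 0 < \<beta> e"
    using \<open>x \<in> Sp - Sq\<close> assms(7) p(1,2) q(2) by auto
  have "conical_position ({p, q} \<union> (E - {x, y}))"
    using bound
    by (intro conical_exchange_private_vertices[OF distinct p(4) q(4) x y I(1) assms(6) I(2)]) simp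
  moreover have "x \<noteq> y" using \<open>x \<in> Sp - Sq\<close> assms(7) by auto
  ultimately show False using not_conical_exchange_two[OF assms(1,2) distinct x(1) y(1)] by blast
qed

lemma crossing_supports_cases:
  assumes "p \<in> X" "q \<in> X" and Sp: "is_support E p Sp" and Sq: "is_support E q Sq"
    and "i \<in> Sp \<inter> Sq" "x \<in> Sp - Sq" "y \<in> Sq - Sp"
  shows "Sp \<union> Sq = E \<and> (card (Sp \<inter> Sq) = 1 \<or> card (Sp \<inter> Sq) = DIM('a) - 1)"
proof -
  have union: "Sp \<union> Sq = E" using crossing_supports_union[OF assms] .
  then have fin: "finite (Sp - Sq)" "finite (Sq - Sp)" "finite (Sp \<inter> Sq)"
    using finite_E by (auto intro: finite_subset)
  have "card (Sp \<inter> Sq) = 1 \<or> card (Sp \<inter> Sq) = DIM('a) - 1"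
  proof (rule ccontr)
    assume neither: "\<not> (card (Sp \<inter> Sq) = 1 \<or> card (Sp \<inter> Sq) = DIM('a) - 1)"
    have "card (Sp \<inter> Sq) \<noteq> 0" using fin(3) assms(5) by auto
    with neither have two: "2 \<le> card (Sp \<inter> Sq)" by linarith
    have "card (Sp - Sq) \<le> 1"
      using crossing_supports_private_card_le_one[OF assms(1-4) union two assms(7)] .
    moreover have "card (Sq - Sp) \<le> 1"
      using crossing_supports_private_card_le_one[OF assms(2,1) Sq Sp _ _ assms(6)] union two
      by (simp add: Int_commute Un_commute)
    moreover have "A = {a}" if "finite A" "card A \<le> 1" "a \<in> A" for A and a :: 'a
      using that card_le_Suc0_iff_eq[OF that(1)] by auto
    ultimately have "Sp - Sq = {x}" "Sq - Sp = {y}" using assms(6,7) fin(1,2) by blast+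
    then have "E = (Sp \<inter> Sq) \<union> {x, y}" "x \<notin> Sp \<inter> Sq" "y \<notin> Sp \<inter> Sq" "x \<noteq> y"
      using union assms(6,7) by blast+
    then have "card E = card (Sp \<inter> Sq) + 2" using fin(3) by simp
    with card_E neither show False by arith
  qed
  with union show ?thesis ..
qed

end

theorem proposition6p2:
  fixes E X :: "'a::euclidean_space set" and p q :: 'a and Sp Sq :: "'a set"
  assumes simplex: "card E = DIM('a) + 1" "\<not> affine_dependent E"
    and sum0: "\<Sum>E = 0"
    and finX: "finite X" and X0: "0 \<notin> X" and EX: "E \<subseteq> X"
    and nomult: "\<forall>x\<in>X. \<forall>y\<in>X. x \<noteq> y \<longrightarrow> \<not> (\<exists>t>0. y = t *\<^sub>R x)"
    and good: "\<forall>A. A \<subseteq> X \<and> card A = DIM('a) + 1 \<longrightarrow> good_position A"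
    and pq: "p \<in> X" "q \<in> X"
    and Sp: "is_support E p Sp" and Sq: "is_support E q Sq"
  shows "Sp \<inter> Sq = {}
      \<or> (Sp \<subseteq> Sq \<or> Sq \<subseteq> Sp)
      \<or> (Sp \<union> Sq = E \<and> card (Sp \<inter> Sq) = 1)
      \<or> (Sp \<union> Sq = E \<and> card (Sp \<inter> Sq) = DIM('a) - 1)"
proof -
  interpret good_configuration E X
    using simplex sum0 EX good by unfold_locales
  show ?thesis
  proof (cases "Sp \<inter> Sq = {} \<or> Sp \<subseteq> Sq \<or> Sq \<subseteq> Sp")
    case False
    then obtain i x y where "i \<in> Sp \<inter> Sq" "x \<in> Sp - Sq" "y \<in> Sq - Sp" by blast
    then show ?thesis using crossing_supports_cases[OF pq Sp Sq] by blast
  qed blast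
qed

end
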